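(* For all integers $n\geq 1$, $$qq(n)+\sum_{j\geq1}(-1)^j\left(qq(n-2j(3j-1))+qq(n-2j(3j+1))\right)=\begin{cases}1,&\text{if $n$ is a triangular number},\\0,&\text{otherwise,}\end{cases}$$ i.e. $qq(n)-qq(n-4)-qq(n-8)+qq(n-20)+qq(n-28)-qq(n-48)-qq(n-60)+\cdots$ equals $1$ if $n$ is triangular and $0$ otherwise.
   Context: $qq(n)$ denotes the number of partitions of $n$ into distinct odd parts, with $qq(0)=1$ and $qq(m)=0$ for $m<0$. A triangular number is an integer of the form $k(k+1)/2$ with $k\ge0$. *)

theory Defs
  imports Main
begin

text \<open>qq m = number of partitions of m into distinct odd parts, i.e. the number of
  finite sets of odd positive integers whose sum is m; qq m = 0 for m < 0, qq 0 = 1.\<close>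
definition qq :: "int \<Rightarrow> nat" where
  "qq m = (if m < 0 then 0
           else card {S :: nat set. finite S \<and> (\<forall>k\<in>S. odd k) \<and> int (\<Sum>S) = m})"

definition triangular :: "int \<Rightarrow> bool" where
  "triangular n \<longleftrightarrow> (\<exists>k::nat. n = int (k * (k + 1) div 2))"

end

(*
  Let F(x) = prod_k (1 + x^(2k+1)) be the generating function of qq. By Euler's pentagonal number
  theorem in x^4, the left-hand side is the coefficient of x^n in F(x) prod_k (1 - x^(4k)).
  Since 1 - x^(4k) = (1 + x^(2k)) (1 + x^k) (1 - x^k), and the factors 1 + x^(2k+1) and 1 + x^(2k)
  together make up prod_k (1 + x^k), this product equals prod_k (1 + x^k)^2 (1 - x^k), which by
  Gauss's identity is sum_k x^(k(k+1)/2).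

  Everything is done with finite products compared modulo x^(N+1): the pentagonal theorem enters
  through Shanks' finite form of it, and Gauss's identity through the q-binomial theorem applied to
  prod_(m <= 2N) (x^N + x^m).
*)

theory Submission
  imports Defs "HOL-Computational_Algebra.Formal_Power_Series"
begin

unbundle fps_syntax

section \<open>Triangular numbers\<close>

fun tri :: "nat \<Rightarrow> nat" where
  "tri 0 = 0"
| "tri (Suc k) = tri k + Suc k"

lemma double_tri: "2 * tri k = k * (k + 1)"
  by (induction k) (auto simp: algebra_simps)

lemma tri_eq_div: "tri k = k * (k + 1) div 2"
  using double_tri[of k] by simp

lemma le_tri: "k \<le> tri k"
  by (induction k) auto

lemma strict_mono_tri: "strict_mono tri"
  unfolding strict_mono_Suc_iff by simp

lemma tri_pred: "tri k = tri (k - 1) + k"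
  by (cases k) auto

lemma tri_add_pred: "tri (a + b - 1) = tri (a - 1) + tri (b - 1) + a * b"
proof (induction b)
  case (Suc b)
  show ?case using Suc tri_pred[of "a + b"] tri_pred[of b] by (simp add: algebra_simps)
qed simp

lemma double_tri_pred: "2 * tri (k - 1) + k = k * k"
proof (cases k)
  case (Suc j)
  then show ?thesis using double_tri[of j] by (simp add: algebra_simps)
qed simp

lemma sum_lessThan_eq_tri: "(\<Sum>m<n. m) = tri (n - 1)"
proof (induction n)
  case (Suc n)
  then show ?case using tri_pred[of n] by simp
qed simp

section \<open>Shanks' finite pentagonal identity\<close>

definition qpoch :: "'a::comm_ring_1 \<Rightarrow> nat \<Rightarrow> 'a" where
  "qpoch x n = (\<Prod>i<n. 1 - x ^ Suc i)"

definition shanks_prod :: "'a::comm_ring_1 \<Rightarrow> nat \<Rightarrow> nat \<Rightarrow> 'a"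
  where
  "shanks_prod x n k = (\<Prod>i\<in>{k<..n}. 1 - x ^ i)"

definition shanks_sum :: "'a::comm_ring_1 \<Rightarrow> nat \<Rightarrow> 'a" where
  "shanks_sum x n = (\<Sum>k\<le>n. (-1) ^ k * x ^ (n * k + tri k) * shanks_prod x n k)"

definition pent_sum :: "'a::comm_ring_1 \<Rightarrow> nat \<Rightarrow> 'a" where
  "pent_sum x n =
     1 + (\<Sum>j\<in>{1..n}. (-1) ^ j * (x ^ (j * j + tri (j - 1)) + x ^ (j * j + tri j)))"

lemma shanks_prod_Suc:
  "k \<le> n \<Longrightarrow> shanks_prod x (Suc n) k = shanks_prod x n k * (1 - x ^ Suc n)"
proof -
  assume "k \<le> n"
  then have "{k<..Suc n} = insert (Suc n) {k<..n}" by auto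
  then show ?thesis unfolding shanks_prod_def by (simp add: mult.commute)
qed

lemma shanks_prod_self [simp]: "shanks_prod x n n = 1"
  unfolding shanks_prod_def by simp

lemma shanks_prod_step:
  "k < n \<Longrightarrow> (1 - x ^ Suc k) * shanks_prod x n (Suc k) = shanks_prod x n k"
proof -
  assume "k < n"
  then have "{k<..n} = insert (Suc k) {Suc k<..n}" by auto
  then show ?thesis unfolding shanks_prod_def by simp
qed

lemma shanks_prod_0: "shanks_prod x n 0 = qpoch x n"
  by (induction n) (simp_all add: shanks_prod_Suc qpoch_def shanks_prod_def[of _ 0 0])

lemma shanks_sum_Suc:
  "shanks_sum x (Suc n) =
     shanks_sum x n +
     (-1) ^ Suc n * (x ^ (Suc n * Suc n + tri n) + x ^ (Suc n * Suc n + tri (Suc n)))"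
proof -
  define t where "t m k = (-1) ^ k * x ^ (m * k + tri k) * shanks_prod x m k" for m k
  define g where "g k = (-1) ^ k * x ^ (Suc n * Suc k + tri k) * shanks_prod x n k" for k
  define G where "G k = (if k = 0 then 0 else g (k - 1))" for k
  have t_Suc: "t (Suc n) k = t n k + (G k - G (Suc k))" if "k \<le> n" for k
  proof -
    have "t (Suc n) k = (-1) ^ k * x ^ (Suc n * k + tri k) * shanks_prod x n k - g k"
      using that by (simp add: t_def g_def shanks_prod_Suc power_add algebra_simps)
    moreover have "(-1) ^ k * x ^ (Suc n * k + tri k) * shanks_prod x n k = t n k * x ^ k"
      by (simp add: t_def power_add algebra_simps)
    moreover have "G k = t n k * x ^ k - t n k"
    proof (cases k)
      case (Suc j)
      have exponent: "Suc n * Suc j + tri j = n * k + tri k"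
        using Suc by simp
      \<comment> \<open>the factor \<open>1 - x ^ k\<close> absorbed here is what makes the sum telescope\<close>
      have absorb: "shanks_prod x n j = (1 - x ^ k) * shanks_prod x n k"
        using Suc that shanks_prod_step[of j n x] by simp
      have "G k = (-1) ^ j * x ^ (Suc n * Suc j + tri j) * shanks_prod x n j"
        using Suc by (simp add: G_def g_def)
      also have "\<dots> = (-1) ^ j * x ^ (n * k + tri k) * ((1 - x ^ k) * shanks_prod x n k)"
        by (simp only: exponent absorb)
      also have "\<dots> = t n k * x ^ k - t n k"
        by (simp add: t_def Suc algebra_simps)
      finally show ?thesis .
    qed (simp add: G_def)
    ultimately show ?thesis by (simp add: G_def)
  qed
  have "shanks_sum x (Suc n) = (\<Sum>k<Suc n. t (Suc n) k) + t (Suc n) (Suc n)"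
    unfolding shanks_sum_def t_def by (simp add: lessThan_Suc_atMost[symmetric])
  also have "(\<Sum>k<Suc n. t (Suc n) k) = (\<Sum>k<Suc n. t n k) + (G 0 - G (Suc n))"
    by (simp add: t_Suc sum.distrib sum_lessThan_telescope')
  also have "(\<Sum>k<Suc n. t n k) = shanks_sum x n"
    unfolding shanks_sum_def t_def by (simp add: lessThan_Suc_atMost)
  finally show ?thesis
    by (simp add: t_def G_def g_def algebra_simps)
qed

theorem shanks_identity: "shanks_sum x n = pent_sum x n"
proof (induction n)
  case 0
  show ?case by (simp add: shanks_sum_def pent_sum_def)
next
  case (Suc n)
  then show ?case by (simp add: shanks_sum_Suc pent_sum_def)
qed

section \<open>Gaussian binomial coefficients\<close>

fun qbinom :: "'a::comm_ring_1 \<Rightarrow> nat \<Rightarrow> nat \<Rightarrow> 'a" where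
  "qbinom q n 0 = 1"
| "qbinom q 0 (Suc k) = 0"
| "qbinom q (Suc n) (Suc k) = qbinom q n k + q ^ Suc k * qbinom q n (Suc k)"

lemma qpoch_Suc: "qpoch q (Suc k) = qpoch q k * (1 - q ^ Suc k)"
  by (simp add: qpoch_def)

lemma qbinom_eq_0: "n < k \<Longrightarrow> qbinom q n k = 0"
  by (induction q n k rule: qbinom.induct) auto

lemma qbinom_mult_qpoch: "qbinom q n k * qpoch q k = (\<Prod>i<k. 1 - q ^ (n - i))"
proof (induction q n k rule: qbinom.induct)
  case (2 q k)
  then show ?case by (simp add: prod.lessThan_Suc_shift)
next
  case (3 q n k)
  define r where "r = (\<Prod>i<k. 1 - q ^ (n - i))"
  have rhs: "(\<Prod>i<Suc k. 1 - q ^ (Suc n - i)) = (1 - q ^ Suc n) * r"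
    unfolding r_def by (subst prod.lessThan_Suc_shift) simp
  show ?case
  proof (cases "k \<le> n")
    case True
    have "Suc k + (n - k) = Suc n"
      using True by simp
    then have "q ^ Suc k * q ^ (n - k) = q ^ Suc n"
      by (metis power_add)
    then have split: "(1 - q ^ Suc k) + q ^ Suc k * (1 - q ^ (n - k)) = 1 - q ^ Suc n"
      by (simp add: algebra_simps)
    have "qbinom q (Suc n) (Suc k) * qpoch q (Suc k)
        = qbinom q n k * qpoch q k * (1 - q ^ Suc k)
          + q ^ Suc k * (qbinom q n (Suc k) * qpoch q (Suc k))"
      by (simp add: qpoch_Suc algebra_simps)
    also have "\<dots> = r * (1 - q ^ Suc k) + q ^ Suc k * (r * (1 - q ^ (n - k)))"
      using 3 by (simp add: r_def)
    also have "\<dots> = r * ((1 - q ^ Suc k) + q ^ Suc k * (1 - q ^ (n - k)))"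
      by (simp add: algebra_simps)
    finally show ?thesis
      by (simp only: split rhs mult.commute)
  next
    case False
    then have "(\<Prod>i<Suc k. 1 - q ^ (Suc n - i)) = 0"
      by (intro prod_zero) (auto intro!: bexI[of _ "Suc n"])
    then show ?thesis using False by (simp add: qbinom_eq_0)
  qed
qed (simp add: qpoch_def)

theorem q_binomial:
  "(\<Prod>m<n. y + z * q ^ m) =
     (\<Sum>k\<le>n. qbinom q n k * z ^ k * y ^ (n - k) * q ^ tri (k - 1))"
proof (induction n arbitrary: z)
  case (Suc n)
  define c where "c k = qbinom q n k * z ^ k * q ^ tri k" for k
  have shift: "qbinom q n k * (z * q) ^ k * y ^ (n - k) * q ^ tri (k - 1) = c k * y ^ (n - k)" for k
    using tri_pred[of k] by (simp add: c_def power_mult_distrib power_add algebra_simps)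
  have "(\<Prod>m<Suc n. y + z * q ^ m) = (y + z) * (\<Prod>m<n. y + (z * q) * q ^ m)"
    by (subst prod.lessThan_Suc_shift) (simp add: mult.assoc)
  also have "\<dots> = (y + z) * (\<Sum>k\<le>n. c k * y ^ (n - k))"
    by (simp only: Suc.IH shift)
  also have "\<dots> = (\<Sum>k\<le>n. y * (c k * y ^ (n - k))) +
      (\<Sum>k\<le>n. z * c k * y ^ (n - k))"
    by (simp add: distrib_right sum_distrib_left sum.distrib mult.assoc)
  also have "(\<Sum>k\<le>n. y * (c k * y ^ (n - k))) = (\<Sum>k\<le>n. c k * y ^ (Suc n - k))"
    by (intro sum.cong) (simp_all add: Suc_diff_le)
  also have "(\<Sum>k\<le>n. c k * y ^ (Suc n - k)) = (\<Sum>k\<le>Suc n. c k * y ^ (Suc n - k))"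
    by (simp add: c_def qbinom_eq_0)
  also have "\<dots> = y ^ Suc n + (\<Sum>k\<le>n. c (Suc k) * y ^ (n - k))"
    by (subst sum.atMost_Suc_shift) (simp add: c_def)
  also have "y ^ Suc n + (\<Sum>k\<le>n. c (Suc k) * y ^ (n - k)) +
      (\<Sum>k\<le>n. z * c k * y ^ (n - k))
      = y ^ Suc n + (\<Sum>k\<le>n. qbinom q (Suc n) (Suc k) * z ^ Suc k * y ^ (n - k) * q ^ tri k)"
    by (simp add: c_def sum.distrib[symmetric] power_add algebra_simps)
  finally show ?case
    by (subst sum.atMost_Suc_shift) (simp del: qbinom.simps(3))
qed simp

section \<open>Agreement of power series below a given degree\<close>

lemma (in comm_monoid_set) lessThan_add_split:
  fixes m n :: nat
  shows "F g {..<m + n} = F g {..<m} \<^bold>* F (\<lambda>i. g (m + i)) {..<n}"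
  by (induction n) (simp_all add: assoc)

lemma fps_cutoff_mult_cong:
  assumes "fps_cutoff n f = fps_cutoff n f'" "fps_cutoff n g = fps_cutoff n g'"
  shows "fps_cutoff n (f * g) = fps_cutoff n (f' * g')"
  using assms unfolding fps_cutoff_eq_fps_cutoff_iff by (simp add: fps_mult_nth)

lemma fps_cutoff_sum_cong:
  assumes "\<And>k. k \<in> A \<Longrightarrow> fps_cutoff n (f k) = fps_cutoff n (g k)"
  shows "fps_cutoff n (sum f A) = fps_cutoff n (sum g A)"
  unfolding fps_cutoff_eq_fps_cutoff_iff fps_sum_nth
proof (intro allI impI sum.cong refl)
  fix i k
  assume "i < n" "k \<in> A"
  then show "f k $ i = g k $ i"
    using assms[of k] by (simp add: fps_cutoff_eq_fps_cutoff_iff)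
qed

lemma fps_cutoff_prod_cong:
  fixes f g :: "'b \<Rightarrow> 'a::comm_semiring_1 fps"
  assumes "\<And>k. k \<in> A \<Longrightarrow> fps_cutoff n (f k) = fps_cutoff n (g k)"
  shows "fps_cutoff n (prod f A) = fps_cutoff n (prod g A)"
  using assms
proof (induction A rule: infinite_finite_induct)
  case (insert k A)
  have "fps_cutoff n (f k * prod f A) = fps_cutoff n (g k * prod g A)"
    using insert by (intro fps_cutoff_mult_cong) simp_all
  then show ?case
    using insert by simp
qed simp_all

lemma fps_cutoff_mono_cong:
  "fps_cutoff n f = fps_cutoff n g \<Longrightarrow> m \<le> n \<Longrightarrow>
   fps_cutoff m f = fps_cutoff m g"
  unfolding fps_cutoff_eq_fps_cutoff_iff by simp

lemma fps_cutoff_X_power_mult: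
  "n \<le> e \<Longrightarrow> fps_cutoff n (fps_X ^ e * f) = 0"
  by (simp add: fps_eq_iff fps_X_power_mult_nth)

lemma fps_cutoff_X_power_mult_cong:
  "fps_cutoff n f = fps_cutoff n g \<Longrightarrow>
   fps_cutoff (e + n) (fps_X ^ e * f) = fps_cutoff (e + n) (fps_X ^ e * g)"
  unfolding fps_cutoff_eq_fps_cutoff_iff by (simp add: fps_X_power_mult_nth)

lemma fps_cutoff_one_plus_X_power:
  "n \<le> e \<Longrightarrow>
   fps_cutoff n (1 + fps_X ^ e) = fps_cutoff n (1 :: 'a::comm_semiring_1 fps)"
  using fps_cutoff_X_power_mult[of n e "1 :: 'a fps"] by (simp add: fps_cutoff_add)

lemma fps_cutoff_one_minus_X_power:
  "n \<le> e \<Longrightarrow> fps_cutoff n (1 - fps_X ^ e) = fps_cutoff n (1 :: 'a::comm_ring_1 fps)"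
  using fps_cutoff_X_power_mult[of n e "1 :: 'a fps"] by (simp add: fps_cutoff_diff)

lemma fps_cutoff_prod_tail:
  fixes f :: "nat \<Rightarrow> 'a::comm_semiring_1 fps"
  assumes "\<And>i. a \<le> i \<Longrightarrow> fps_cutoff n (f i) = fps_cutoff n 1" and "a \<le> b"
  shows "fps_cutoff n (\<Prod>i<b. f i) = fps_cutoff n (\<Prod>i<a. f i)"
proof -
  obtain d where b: "b = a + d"
    using \<open>a \<le> b\<close> le_Suc_ex by blast
  have "fps_cutoff n (\<Prod>i<d. f (a + i)) = fps_cutoff n (\<Prod>i<d. 1)"
    using assms(1) by (intro fps_cutoff_prod_cong) simp
  then have "fps_cutoff n ((\<Prod>i<a. f i) * (\<Prod>i<d. f (a + i))) =
      fps_cutoff n ((\<Prod>i<a. f i) * 1)"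
    by (intro fps_cutoff_mult_cong) simp_all
  then show ?thesis
    by (simp add: b prod.lessThan_add_split)
qed

lemma fps_X_power_mult_cancel:
  fixes f g :: "'a::comm_semiring_1 fps"
  assumes "fps_X ^ c * f = fps_X ^ c * g"
  shows "f = g"
proof -
  have "fps_shift c (fps_X ^ c * f) = fps_shift c (fps_X ^ c * g)"
    using assms by (rule arg_cong)
  then show ?thesis
    by (simp only: mult.commute[of "fps_X ^ c"] fps_shift_times_fps_X_power')
qed

section \<open>Gauss's identity for triangular numbers\<close>

definition qpoch_plus :: "'a::comm_ring_1 \<Rightarrow> nat \<Rightarrow> 'a" where
  "qpoch_plus x n = (\<Prod>i<n. 1 + x ^ Suc i)"

lemma qpoch_cutoff_min:
  "fps_cutoff (Suc (min a b)) (qpoch fps_X a) =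
   fps_cutoff (Suc (min a b)) (qpoch (fps_X :: 'a::comm_ring_1 fps) b)"
proof -
  have "fps_cutoff (Suc (min a b)) (qpoch fps_X c) =
      fps_cutoff (Suc (min a b)) (qpoch (fps_X :: 'a fps) (min a b))"
    if "min a b \<le> c" for c
    unfolding qpoch_def using that
    by (intro fps_cutoff_prod_tail fps_cutoff_one_minus_X_power) simp_all
  from this[of a] this[of b] show ?thesis
    by simp
qed

lemma qpoch_plus_cutoff_tail:
  fixes b :: nat
  assumes "a \<le> b"
  shows "fps_cutoff (Suc a) (qpoch_plus (fps_X :: 'a::comm_ring_1 fps) b) =
    fps_cutoff (Suc a) (qpoch_plus fps_X a)"
  unfolding qpoch_plus_def using assms
  by (intro fps_cutoff_prod_tail fps_cutoff_one_plus_X_power) simp_all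

lemma qbinom_mult_qpoch_cutoff:
  assumes "k \<le> n"
  shows "fps_cutoff (Suc (min L (min k (n - k)))) (qbinom fps_X n k * qpoch fps_X L)
    = fps_cutoff (Suc (min L (min k (n - k)))) (1 :: 'a::comm_ring_1 fps)"
    (is "fps_cutoff ?m _ = _")
proof -
  have "fps_cutoff ?m (qbinom fps_X n k * qpoch fps_X L) =
      fps_cutoff ?m (qbinom fps_X n k * qpoch (fps_X :: 'a fps) k)"
    using qpoch_cutoff_min[of L k] by (intro fps_cutoff_mult_cong) (auto elim: fps_cutoff_mono_cong)
  also have "qbinom fps_X n k * qpoch fps_X k = (\<Prod>i<k. 1 - (fps_X :: 'a fps) ^ (n - i))"
    by (rule qbinom_mult_qpoch)
  also have "fps_cutoff (Suc (n - k)) \<dots> = fps_cutoff (Suc (n - k)) (\<Prod>i<k. 1)"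
    using \<open>k \<le> n\<close> by (intro fps_cutoff_prod_cong fps_cutoff_one_minus_X_power) auto
  then have "fps_cutoff ?m (\<Prod>i<k. 1 - (fps_X :: 'a fps) ^ (n - i)) = fps_cutoff ?m 1"
    by (auto elim: fps_cutoff_mono_cong)
  finally show ?thesis .
qed

abbreviation X :: "int fps" where "X \<equiv> fps_X"

definition tri_series :: "nat \<Rightarrow> int fps" where
  "tri_series N = (\<Sum>a\<le>N. X ^ tri a)"

lemma prod_X_power_plus_X_power:
  "(\<Prod>m<2 * N + 1. X ^ N + X ^ m) = X ^ (tri (N - 1) + N + N * N) * (2 * qpoch_plus X N ^ 2)"
proof -
  have low: "(\<Prod>m<N. X ^ N + X ^ m) = X ^ tri (N - 1) * qpoch_plus X N"
  proof -
    have "(\<Prod>m<N. X ^ N + X ^ m) = (\<Prod>m<N. X ^ m * (1 + X ^ (N - m)))"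
      by (intro prod.cong) (simp_all add: algebra_simps flip: power_add)
    also have "\<dots> = X ^ (\<Sum>m<N. m) * (\<Prod>m<N. 1 + X ^ Suc (N - Suc m))"
      by (simp add: prod.distrib power_sum Suc_diff_Suc)
    also have "(\<Prod>m<N. 1 + X ^ Suc (N - Suc m)) = qpoch_plus X N"
      unfolding qpoch_plus_def by (rule prod.nat_diff_reindex)
    finally show ?thesis
      by (simp add: sum_lessThan_eq_tri)
  qed
  have high: "(\<Prod>i<N. X ^ N + X ^ (N + Suc i)) = X ^ (N * N) * qpoch_plus X N"
  proof -
    have "(\<Prod>i<N. X ^ N + X ^ (N + Suc i)) = (\<Prod>i<N. X ^ N * (1 + X ^ Suc i))"
      by (intro prod.cong) (simp_all add: power_add algebra_simps)
    then show ?thesis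
      by (simp add: qpoch_plus_def prod.distrib power_mult)
  qed
  have "2 * N + 1 = N + Suc N"
    by simp
  then have "(\<Prod>m<2 * N + 1. X ^ N + X ^ m)
      = (\<Prod>m<N. X ^ N + X ^ m) *
        ((X ^ N + X ^ (N + 0)) * (\<Prod>i<N. X ^ N + X ^ (N + Suc i)))"
    by (simp only: prod.lessThan_add_split prod.lessThan_Suc_shift)
  also have "\<dots> = X ^ tri (N - 1) * qpoch_plus X N *
      ((X ^ N + X ^ N) * (X ^ (N * N) * qpoch_plus X N))"
    by (simp only: low high add_0_right)
  also have "\<dots> = X ^ (tri (N - 1) + N + N * N) * (2 * qpoch_plus X N ^ 2)"
    by (simp add: power_add power2_eq_square algebra_simps)
  finally show ?thesis .
qed

lemma gauss_exponent_low:
  assumes "a \<le> N"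
  shows "N * (2 * N + 1 - (N - a)) + tri (N - a - 1) = tri (N - 1) + N + N * N + tri a"
proof -
  obtain d where N: "N = a + d" using assms le_Suc_ex by blast
  then show ?thesis
    using tri_add_pred[of a d] tri_pred[of a] double_tri_pred[of a] by (simp add: algebra_simps)
qed

lemma gauss_exponent_high:
  assumes "b \<le> N"
  shows "N * (2 * N + 1 - (Suc N + b)) + tri (Suc N + b - 1) = tri (N - 1) + N + N * N + tri b"
proof -
  obtain d where N: "N = b + d" using assms le_Suc_ex by blast
  then show ?thesis
    using tri_add_pred[of N "Suc b"] tri_pred[of b] by (simp add: algebra_simps)
qed

lemma gauss_finite:
  "2 * qpoch_plus X N ^ 2 =
     (\<Sum>a\<le>N. (qbinom X (2 * N + 1) (N - a) + qbinom X (2 * N + 1) (Suc N + a)) * X ^ tri a)"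
proof (rule fps_X_power_mult_cancel)
  define c where "c = tri (N - 1) + N + N * N"
  define h where "h k = qbinom X (2 * N + 1) k * X ^ (N * (2 * N + 1 - k) + tri (k - 1))" for k
  have h_low: "h (N - a) = X ^ c * (qbinom X (2 * N + 1) (N - a) * X ^ tri a)" if "a \<le> N" for a
    unfolding h_def gauss_exponent_low[OF that] c_def[symmetric] by (simp add: power_add ac_simps)
  have h_high: "h (Suc N + a) = X ^ c * (qbinom X (2 * N + 1) (Suc N + a) * X ^ tri a)"
    if "a \<le> N" for a
    unfolding h_def gauss_exponent_high[OF that] c_def[symmetric] by (simp add: power_add ac_simps)
  have "X ^ c * (2 * qpoch_plus X N ^ 2) = (\<Prod>m<2 * N + 1. X ^ N + 1 * X ^ m)"
    by (simp only: mult_1 prod_X_power_plus_X_power c_def)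
  also have "\<dots> = (\<Sum>k\<le>2 * N + 1.
      qbinom X (2 * N + 1) k * 1 ^ k * (X ^ N) ^ (2 * N + 1 - k) * X ^ tri (k - 1))"
    by (rule q_binomial)
  also have "\<dots> = (\<Sum>k<Suc N + Suc N. h k)"
    by (simp add: h_def power_mult power_add lessThan_Suc_atMost[symmetric] mult_2 mult.assoc)
  also have "\<dots> = (\<Sum>k<Suc N. h k) + (\<Sum>a<Suc N. h (Suc N + a))"
    by (rule sum.lessThan_add_split)
  also have "(\<Sum>k<Suc N. h k) = (\<Sum>a<Suc N. h (N - a))"
    using sum.nat_diff_reindex[of h "Suc N"] by simp
  also have "(\<Sum>a<Suc N. h (N - a)) + (\<Sum>a<Suc N. h (Suc N + a))
      = (\<Sum>a\<le>N. X ^ c * (qbinom X (2 * N + 1) (N - a) * X ^ tri a))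
        + (\<Sum>a\<le>N. X ^ c * (qbinom X (2 * N + 1) (Suc N + a) * X ^ tri a))"
    unfolding lessThan_Suc_atMost
    by (intro arg_cong2[where f = "(+)"] sum.cong) (simp_all only: atMost_iff h_low h_high)
  also have "\<dots> = X ^ c *
      (\<Sum>a\<le>N. (qbinom X (2 * N + 1) (N - a) + qbinom X (2 * N + 1) (Suc N + a)) * X ^ tri a)"
    by (simp only: sum_distrib_left distrib_left distrib_right sum.distrib)
  finally show "X ^ c * (2 * qpoch_plus X N ^ 2) = \<dots>" .
qed

theorem gauss_cutoff:
  "fps_cutoff (Suc N) (qpoch_plus X N ^ 2 * qpoch X N) = fps_cutoff (Suc N) (tri_series N)"
proof -
  define B where "B k = qbinom X (2 * N + 1) k" for k
  have summand: "fps_cutoff (Suc N) (B k * X ^ tri a * qpoch X N) = fps_cutoff (Suc N) (X ^ tri a)"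
    if "a \<le> N" and "k = N - a \<or> k = Suc N + a" for a k
  proof -
    have "fps_cutoff (Suc (min N (min k (2 * N + 1 - k)))) (B k * qpoch X N) =
        fps_cutoff (Suc (min N (min k (2 * N + 1 - k)))) 1"
      unfolding B_def using that by (intro qbinom_mult_qpoch_cutoff) auto
    moreover have "min N (min k (2 * N + 1 - k)) = N - a"
      using that by auto
    ultimately have "fps_cutoff (tri a + Suc (N - a)) (X ^ tri a * (B k * qpoch X N)) =
        fps_cutoff (tri a + Suc (N - a)) (X ^ tri a * 1)"
      by (intro fps_cutoff_X_power_mult_cong) simp
    then have "fps_cutoff (Suc N) (X ^ tri a * (B k * qpoch X N)) = fps_cutoff (Suc N) (X ^ tri a * 1)"
      by (rule fps_cutoff_mono_cong) (use le_tri[of a] that in simp)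
    then show ?thesis
      by (simp add: mult.commute mult.left_commute)
  qed
  have "fps_cutoff (Suc N) (2 * qpoch_plus X N ^ 2 * qpoch X N) =
      fps_cutoff (Suc N) (\<Sum>a\<le>N. (B (N - a) + B (Suc N + a)) * X ^ tri a * qpoch X N)"
    by (simp only: gauss_finite sum_distrib_right B_def)
  also have "\<dots> = fps_cutoff (Suc N) (\<Sum>a\<le>N. 2 * X ^ tri a)"
  proof (rule fps_cutoff_sum_cong)
    fix a assume "a \<in> {..N}"
    then have "a \<le> N" by simp
    then show "fps_cutoff (Suc N) ((B (N - a) + B (Suc N + a)) * X ^ tri a * qpoch X N) =
        fps_cutoff (Suc N) (2 * X ^ tri a)"
      by (simp only: distrib_right fps_cutoff_add summand[of a "N - a"] summand[of a "Suc N + a"]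
          mult_2[of "X ^ tri a"] simp_thms)
  qed
  also have "\<dots> = fps_cutoff (Suc N) (2 * tri_series N)"
    by (simp only: tri_series_def sum_distrib_left)
  finally show ?thesis
    unfolding fps_cutoff_eq_fps_cutoff_iff by (simp add: mult.assoc numeral_fps_const)
qed

lemma tri_series_nth_self: "tri_series N $ N = (if triangular (int N) then 1 else 0)"
proof -
  have tri_iff: "triangular (int N) \<longleftrightarrow> (\<exists>k. tri k = N)"
    unfolding triangular_def tri_eq_div by auto
  have coeff: "tri_series N $ N = (\<Sum>a\<le>N. if tri a = N then 1 else 0)"
    unfolding tri_series_def fps_sum_nth by (intro sum.cong) auto
  show ?thesis
  proof (cases "\<exists>k. tri k = N")
    case True
    then obtain k where k: "tri k = N" ..
    have "(\<Sum>a\<le>N. if tri a = N then 1 else 0) =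
        (\<Sum>a\<le>N. if a = k then 1 else 0 :: int)"
      using k strict_mono_eq[OF strict_mono_tri] by (intro sum.cong) auto
    also have "\<dots> = 1"
      using le_tri[of k] k by simp
    finally show ?thesis
      using coeff tri_iff True by simp
  next
    case False
    then show ?thesis
      using coeff tri_iff by simp
  qed
qed

section \<open>Partitions into distinct odd parts\<close>

lemma prod_one_plus_X_power_nth:
  fixes g :: "'b \<Rightarrow> nat"
  assumes "finite A"
  shows "(\<Prod>i\<in>A. 1 + fps_X ^ g i :: 'a::comm_semiring_1 fps) $ m =
    of_nat (card {S. S \<subseteq> A \<and> sum g S = m})"
proof -
  have "(\<Prod>i\<in>A. 1 + fps_X ^ g i :: 'a fps) =
      (\<Sum>S\<in>Pow A. (\<Prod>i\<in>S. fps_X ^ g i) * (\<Prod>i\<in>A - S. 1))"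
    using prod_add[OF assms, of "\<lambda>i. fps_X ^ g i" "\<lambda>_. 1"] by (simp add: add.commute)
  also have "\<dots> = (\<Sum>S\<in>Pow A. fps_X ^ sum g S)"
    by (simp add: power_sum)
  finally have "(\<Prod>i\<in>A. 1 + fps_X ^ g i :: 'a fps) $ m =
      (\<Sum>S\<in>Pow A. fps_X ^ sum g S :: 'a fps) $ m"
    by (rule arg_cong)
  also have "\<dots> = (\<Sum>S\<in>Pow A. of_bool (sum g S = m))"
    by (simp add: fps_sum_nth of_bool_def eq_commute)
  also have "\<dots> = of_nat (card {S. S \<subseteq> A \<and> sum g S = m})"
    using assms by (simp add: Pow_def Int_def)
  finally show ?thesis .
qed

lemma image_odd_subsets:
  fixes m N :: nat
  assumes "m \<le> N"
  shows "(`) (\<lambda>i::nat. 2 * i + 1) ` {S. S \<subseteq> {..<N} \<and> (\<Sum>i\<in>S. 2 * i + 1) = m}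
         = {T. finite T \<and> (\<forall>k\<in>T. odd k) \<and> \<Sum>T = m}"
    (is "(`) ?f ` ?A = ?B")
proof
  have inj: "inj ?f"
    by (auto simp: inj_def)
  show "(`) ?f ` ?A \<subseteq> ?B"
    using inj by (auto simp: sum.reindex inj_on_subset finite_subset)
  show "?B \<subseteq> (`) ?f ` ?A"
  proof
    fix T assume T: "T \<in> ?B"
    define S where "S = ?f -` T"
    have "T = ?f ` S"
      unfolding S_def using T by (auto simp: image_iff elim!: oddE)
    moreover have "S \<subseteq> {..<N}"
    proof
      fix i assume "i \<in> S"
      then have "?f i \<le> \<Sum>T"
        using T by (intro member_le_sum) (auto simp: S_def)
      then show "i \<in> {..<N}"
        using T assms by simp
    qed
    moreover have "(\<Sum>i\<in>S. ?f i) = m"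
      using T \<open>T = ?f ` S\<close> inj by (simp add: sum.reindex inj_on_subset)
    ultimately show "T \<in> (`) ?f ` ?A"
      by blast
  qed
qed

definition odd_prod :: "nat \<Rightarrow> int fps" where
  "odd_prod N = (\<Prod>i<N. 1 + X ^ (2 * i + 1))"

lemma odd_prod_nth:
  assumes "m \<le> N"
  shows "odd_prod N $ m = int (qq (int m))"
proof -
  have "inj_on ((`) (\<lambda>i. 2 * i + 1)) {S. S \<subseteq> {..<N} \<and> (\<Sum>i\<in>S. 2 * i + 1) = m}"
    by (intro inj_on_image) (auto simp: inj_on_def)
  then have card_eq: "card {S. S \<subseteq> {..<N} \<and> (\<Sum>i\<in>S. 2 * i + 1) = m}
      = card {T. finite T \<and> (\<forall>k\<in>T. odd k) \<and> \<Sum>T = m}"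
    using image_odd_subsets[OF assms] card_image by fastforce
  have "odd_prod N $ m = int (card {S. S \<subseteq> {..<N} \<and> (\<Sum>i\<in>S. 2 * i + 1) = m})"
    unfolding odd_prod_def by (rule prod_one_plus_X_power_nth) simp
  also have "\<dots> = int (qq (int m))"
    unfolding card_eq by (simp add: qq_def del: of_nat_sum)
  finally show ?thesis .
qed

lemma X_power_mult_odd_prod_nth: "(X ^ e * odd_prod N) $ N = int (qq (int N - int e))"
  by (simp add: fps_X_power_mult_nth odd_prod_nth qq_def of_nat_diff)

lemma odd_prod_mult_qpoch:
  "odd_prod N * qpoch (X ^ 4) N = qpoch_plus X (2 * N) * qpoch_plus X N * qpoch X N"
proof (induction N)
  case (Suc N)
  have factor:
    "(1 + X ^ Suc (Suc (2 * N))) * ((1 + X ^ Suc N) * (1 - X ^ Suc N)) = 1 - (X ^ 4) ^ Suc N"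
  proof -
    have "Suc (Suc (2 * N)) = Suc N * 2" and "4 * Suc N = Suc N * 4"
      by simp_all
    then have "X ^ Suc (Suc (2 * N)) = (X ^ Suc N) ^ 2" and "(X ^ 4) ^ Suc N = (X ^ Suc N) ^ 4"
      by (simp_all only: power_mult[symmetric])
    then show ?thesis
      by (simp add: algebra_simps power2_eq_square power4_eq_xxxx)
  qed
  have "odd_prod (Suc N) * qpoch (X ^ 4) (Suc N) =
      odd_prod N * qpoch (X ^ 4) N * (1 + X ^ (2 * N + 1)) * (1 - (X ^ 4) ^ Suc N)"
    by (simp add: odd_prod_def qpoch_def ac_simps)
  also have "\<dots> = qpoch_plus X (2 * N) * qpoch_plus X N * qpoch X N * (1 + X ^ (2 * N + 1)) *
      ((1 + X ^ Suc (Suc (2 * N))) * ((1 + X ^ Suc N) * (1 - X ^ Suc N)))"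
    by (simp only: Suc.IH factor)
  also have "\<dots> = qpoch_plus X (2 * Suc N) * qpoch_plus X (Suc N) * qpoch X (Suc N)"
    by (simp add: qpoch_plus_def qpoch_def ac_simps)
  finally show ?case .
qed (simp add: odd_prod_def qpoch_def qpoch_plus_def)

lemma shanks_sum_cutoff:
  "fps_cutoff (Suc N) (shanks_sum (X ^ 4) N) = fps_cutoff (Suc N) (qpoch (X ^ 4) N)"
proof -
  define t where "t k = (-1) ^ k * (X ^ 4) ^ (N * k + tri k) * shanks_prod (X ^ 4) N k" for k
  have "fps_cutoff (Suc N) (t (Suc k)) = fps_cutoff (Suc N) 0" for k
  proof -
    define e where "e = N * Suc k + tri (Suc k)"
    have "t (Suc k) = X ^ (4 * e) * ((-1) ^ Suc k * shanks_prod (X ^ 4) N (Suc k))"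
      unfolding t_def e_def[symmetric] power_mult[of X 4 e] by (simp only: ac_simps)
    moreover have "Suc N \<le> 4 * e"
      by (simp add: e_def)
    ultimately show ?thesis
      by (simp only: fps_cutoff_X_power_mult fps_cutoff_zero)
  qed
  then have "fps_cutoff (Suc N) (\<Sum>k<N. t (Suc k)) = fps_cutoff (Suc N) (\<Sum>k<N. 0)"
    by (intro fps_cutoff_sum_cong)
  moreover have "shanks_sum (X ^ 4) N = qpoch (X ^ 4) N + (\<Sum>k<N. t (Suc k))"
    unfolding shanks_sum_def t_def[symmetric] sum.atMost_shift by (simp add: t_def shanks_prod_0)
  ultimately show ?thesis
    by (simp add: fps_cutoff_add)
qed

theorem odd_prod_pent_sum_cutoff:
  "fps_cutoff (Suc N) (odd_prod N * pent_sum (X ^ 4) N) = fps_cutoff (Suc N) (tri_series N)"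
proof -
  have "fps_cutoff (Suc N) (odd_prod N * pent_sum (X ^ 4) N) =
      fps_cutoff (Suc N) (odd_prod N * qpoch (X ^ 4) N)"
    using shanks_sum_cutoff by (intro fps_cutoff_mult_cong) (simp_all flip: shanks_identity)
  also have "\<dots> = fps_cutoff (Suc N) (qpoch_plus X (2 * N) * qpoch_plus X N * qpoch X N)"
    by (simp only: odd_prod_mult_qpoch)
  also have "\<dots> = fps_cutoff (Suc N) (qpoch_plus X N * qpoch_plus X N * qpoch X N)"
    using qpoch_plus_cutoff_tail[of N "2 * N"] by (intro fps_cutoff_mult_cong) simp_all
  also have "\<dots> = fps_cutoff (Suc N) (tri_series N)"
    using gauss_cutoff by (simp add: power2_eq_square)
  finally show ?thesis .
qed

lemma pentagonal_exponents:
  "int (4 * (j * j + tri (j - 1))) = 2 * int j * (3 * int j - 1)"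
  "int (4 * (j * j + tri j)) = 2 * int j * (3 * int j + 1)"
proof -
  have double_tri_int: "2 * int (tri k) = int k * (int k + 1)" for k
    using arg_cong[OF double_tri[of k], of int] by (simp add: algebra_simps)
  show "int (4 * (j * j + tri (j - 1))) = 2 * int j * (3 * int j - 1)"
  proof (cases j)
    case (Suc i)
    then show ?thesis
      using double_tri_int[of i] by (simp add: algebra_simps)
  qed simp
  show "int (4 * (j * j + tri j)) = 2 * int j * (3 * int j + 1)"
    using double_tri_int[of j] by (simp add: algebra_simps)
qed

lemma neg_one_power_mult_nth: "((-1) ^ j * f :: 'a::comm_ring_1 fps) $ n = (-1) ^ j * f $ n"
proof -
  have "(-1) ^ j = fps_const ((-1) ^ j :: 'a)"
    by (simp flip: fps_const_power fps_const_neg)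
  then show ?thesis
    by simp
qed

lemma odd_prod_pent_sum_nth:
  "(odd_prod N * pent_sum (X ^ 4) N) $ N = int (qq (int N)) +
     (\<Sum>j\<in>{1..N}. (-1) ^ j *
        (int (qq (int N - 2 * int j * (3 * int j - 1))) + int (qq (int N - 2 * int j * (3 * int j + 1)))))"
proof -
  have "odd_prod N * pent_sum (X ^ 4) N = odd_prod N + (\<Sum>j\<in>{1..N}. (-1) ^ j *
      ((X ^ 4) ^ (j * j + tri (j - 1)) * odd_prod N + (X ^ 4) ^ (j * j + tri j) * odd_prod N))"
    by (simp add: pent_sum_def algebra_simps sum_distrib_left)
  moreover have "((-1) ^ j *
      ((X ^ 4) ^ (j * j + tri (j - 1)) * odd_prod N + (X ^ 4) ^ (j * j + tri j) * odd_prod N)) $ N =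
      (-1) ^ j *
        (int (qq (int N - 2 * int j * (3 * int j - 1))) + int (qq (int N - 2 * int j * (3 * int j + 1))))"
    for j
    by (simp only: neg_one_power_mult_nth fps_add_nth X_power_mult_odd_prod_nth pentagonal_exponents
        flip: power_mult)
  ultimately show ?thesis
    by (simp add: fps_sum_nth odd_prod_nth)
qed

theorem theorem5:
  fixes n :: int
  assumes "n \<ge> 1"
  shows "int (qq n) + (\<Sum>j\<in>{1..n}. (-1) ^ nat j *
            (int (qq (n - 2*j*(3*j - 1))) + int (qq (n - 2*j*(3*j + 1)))))
         = (if triangular n then 1 else 0)"
proof -
  obtain N where n: "n = int N"
    using assms zero_le_imp_eq_int by force
  have "(odd_prod N * pent_sum (X ^ 4) N) $ N = tri_series N $ N"
    using odd_prod_pent_sum_cutoff[of N] unfolding fps_cutoff_eq_fps_cutoff_iff by simp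
  moreover have "{1..n} = int ` {1..N}"
    by (simp add: n image_int_atLeastAtMost)
  ultimately show ?thesis
    by (simp add: odd_prod_pent_sum_nth tri_series_nth_self sum.reindex n)
qed

end
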